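(* Let $L\subseteq\mathbb{Z}^n$ be a lattice, let $L_{\mathbb{R}}$ carry an $L$-equivariant cell complex structure, and let $\psi\colon L_{\mathbb{R}}\to\mathbb{Z}^n$ be a compatible $\mathbb{Z}^n$-stratification. Then the $S$-module $M_\psi\otimes_{S[L]}S$ is (isomorphic to) the $S$-submodule of the group algebra $\Bbbk[\mathbb{Z}^n/L]$ generated by $\{\bm x^{\eta(\psi(\bm p))}:\bm p\text{ a vertex (0-cell) of }L_{\mathbb{R}}\}$.
   Context: Let $n\ge1$, $L\subseteq\mathbb{Z}^n$ a subgroup, $L_{\mathbb{R}}=L\otimes_{\mathbb{Z}}\mathbb{R}\subseteq\mathbb{R}^n$. A cell complex structure on $L_{\mathbb{R}}$ is $L$-equivariant if every translate by $\bm v\in L$ of an open cell is an open cell. Give $\mathbb{Z}^n$ the componentwise order and the Alexandrov topology (open sets = up-closed sets). A compatible $\mathbb{Z}^n$-stratification is a continuous map $\psi\colon L_{\mathbb{R}}\to\mathbb{Z}^n$ constant on each open cell with $\psi(\bm p+\bm v)=\psi(\bm p)+\bm v$ for all $\bm p\in L_{\mathbb{R}},\bm v\in L$. Let $\Bbbk$ be a field, $S=\Bbbk[x_1,\dots,x_n]$, $R=\Bbbk[x_1^{\pm1},\dots,x_n^{\pm1}]$, and $M_\psi\subseteq R$ the $S$-submodule generated by $\{\bm x^{\psi(\bm p)}:\bm p\in L_{\mathbb{R}}\}$. Let $S[L]=S[\bm z^{\bm v}:\bm v\in L]\subseteq S[z_1^{\pm1},\dots,z_n^{\pm1}]$, graded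 by $\deg(\bm x^{\bm u}\bm z^{\bm v})=\bm u+\bm v$. $R$ (and hence $M_\psi$, which is stable under this action) is an $S[L]$-module via $\bm x^{\bm u}\bm z^{\bm v}\mapsto \bm x^{\bm u+\bm v}$, and $S$ is an $S[L]$-module via $S\cong S[L]/\langle \bm z^{\bm v}-1:\bm v\in L\rangle$. Let $\eta\colon\mathbb{Z}^n\to\mathbb{Z}^n/L$ be the quotient map, and $\Bbbk[\mathbb{Z}^n/L]$ the group algebra, an $S$-module via $\bm x^{\bm u}\mapsto \bm x^{\eta(\bm u)}$. *)

theory Defs
  imports "HOL-Analysis.Analysis" "HOL-Library.Poly_Mapping" "HOL-Library.Product_Plus"
begin

definition subgroup_Zn :: "(int^'n::finite) set \<Rightarrow> bool" where
  "subgroup_Zn L \<longleftrightarrow> 0 \<in> L \<and> (\<forall>u\<in>L. \<forall>v\<in>L. u + v \<in> L) \<and> (\<forall>u\<in>L. - u \<in> L)"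

definition real_of_intvec :: "int^'n::finite \<Rightarrow> real^'n" where
  "real_of_intvec v = (\<chi> i. real_of_int (v $ i))"

definition LR :: "(int^'n::finite) set \<Rightarrow> (real^'n) set" where
  "LR L = span (real_of_intvec ` L)"

text \<open>Closed and open d-balls, d = card J, realized inside the coordinate subspace
  spanned by the coordinates in J.\<close>

definition cdisc :: "'n::finite set \<Rightarrow> (real^'n) set" where
  "cdisc J = {x. (\<forall>i. i \<notin> J \<longrightarrow> x $ i = 0) \<and> norm x \<le> 1}"

definition odisc :: "'n::finite set \<Rightarrow> (real^'n) set" where
  "odisc J = {x. (\<forall>i. i \<notin> J \<longrightarrow> x $ i = 0) \<and> norm x < 1}"

definition cell_of_dim :: "(real^'m::finite) set \<Rightarrow> nat \<Rightarrow> bool" where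
  "cell_of_dim e d \<longleftrightarrow> (\<exists>(J::'m set) f g. card J = d \<and> continuous_on (cdisc J) f \<and>
       f ` cdisc J = closure e \<and> homeomorphism (odisc J) e f g)"

definition cell_complex :: "(real^'m::finite) set \<Rightarrow> (real^'m) set set \<Rightarrow> bool" where
  "cell_complex X C \<longleftrightarrow>
     (\<forall>e\<in>C. e \<noteq> {}) \<and> pairwise disjnt C \<and> \<Union>C = X \<and>
     (\<forall>e\<in>C. \<exists>d. cell_of_dim e d \<and>
         closure e - e \<subseteq> \<Union>{e'\<in>C. \<exists>d'<d. cell_of_dim e' d'}) \<and>
     (\<forall>e\<in>C. finite {e'\<in>C. e' \<inter> closure e \<noteq> {}}) \<and>
     (\<forall>A. A \<subseteq> X \<longrightarrow> (closedin (top_of_set X) A \<longleftrightarrow>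
            (\<forall>e\<in>C. closedin (top_of_set X) (A \<inter> closure e))))"

definition L_equivariant :: "(int^'n::finite) set \<Rightarrow> (real^'n) set set \<Rightarrow> bool" where
  "L_equivariant L C \<longleftrightarrow> (\<forall>e\<in>C. \<forall>v\<in>L. (\<lambda>p. p + real_of_intvec v) ` e \<in> C)"

text \<open>Vertices = 0-cells (a 0-cell is a single point).\<close>

definition vertices :: "(real^'m::finite) set set \<Rightarrow> (real^'m) set" where
  "vertices C = {p. {p} \<in> C}"

text \<open>Alexandrov topology on Z^n with componentwise order: open sets are up-closed sets.\<close>

definition up_closed :: "(int^'n::finite) set \<Rightarrow> bool" where
  "up_closed U \<longleftrightarrow> (\<forall>u\<in>U. \<forall>w. u \<le> w \<longrightarrow> w \<in> U)"

definition compatible_stratification ::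
  "(int^'n::finite) set \<Rightarrow> (real^'n) set set \<Rightarrow> (real^'n \<Rightarrow> int^'n) \<Rightarrow> bool" where
  "compatible_stratification L C \<psi> \<longleftrightarrow>
     (\<forall>U. up_closed U \<longrightarrow> openin (top_of_set (LR L)) {p \<in> LR L. \<psi> p \<in> U}) \<and>
     (\<forall>e\<in>C. \<forall>p\<in>e. \<forall>q\<in>e. \<psi> p = \<psi> q) \<and>
     (\<forall>p\<in>LR L. \<forall>v\<in>L. \<psi> (p + real_of_intvec v) = \<psi> p + v)"

text \<open>Laurent polynomial ring R = k[x^{+-1}] as finitely supported maps from Z^n to k
  (with convolution product); monomial x^u is single u 1.\<close>

type_synonym ('n, 'k) laurent = "(int^'n) \<Rightarrow>\<^sub>0 'k"

definition xmono :: "int^'n::finite \<Rightarrow> ('n, 'k::field) laurent" where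
  "xmono u = Poly_Mapping.single u 1"

text \<open>S = k[x_1..x_n] as the subring of R of polynomials with exponents in N^n.\<close>

definition Spoly :: "('n::finite, 'k::field) laurent set" where
  "Spoly = {f. \<forall>u\<in>Poly_Mapping.keys f. 0 \<le> u}"

definition gen_span :: "('a \<Rightarrow> 'b \<Rightarrow> 'b::comm_monoid_add) \<Rightarrow> 'a set \<Rightarrow> 'b set \<Rightarrow> 'b set" where
  "gen_span act A B = {x. \<exists>(N::nat) (a::nat \<Rightarrow> 'a) (b::nat \<Rightarrow> 'b).
     (\<forall>j<N. a j \<in> A \<and> b j \<in> B) \<and> x = (\<Sum>j<N. act (a j) (b j))}"

definition M_psi :: "(int^'n::finite) set \<Rightarrow> (real^'n \<Rightarrow> int^'n) \<Rightarrow> ('n, 'k::field) laurent set" where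
  "M_psi L \<psi> = gen_span (*) Spoly {xmono (\<psi> p) | p. p \<in> LR L}"

text \<open>S[L] = S[z^v : v \<in> L], modelled inside k[x,z^{+-1}] as finitely supported maps on pairs
  (u,v) (monomial x^u z^v), with u \<ge> 0 and v \<in> L.\<close>

type_synonym ('n, 'k) xz = "((int^'n) \<times> (int^'n)) \<Rightarrow>\<^sub>0 'k"

definition SL :: "(int^'n::finite) set \<Rightarrow> ('n, 'k::field) xz set" where
  "SL L = {f. \<forall>k\<in>Poly_Mapping.keys f. 0 \<le> fst k \<and> snd k \<in> L}"

text \<open>The ring map S[L] \<rightarrow> R, x^u z^v \<mapsto> x^(u+v), through which S[L] acts on R.\<close>

definition SL_to_R :: "('n::finite, 'k::field) xz \<Rightarrow> ('n, 'k) laurent" where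
  "SL_to_R f = (\<Sum>k\<in>Poly_Mapping.keys f. Poly_Mapping.single (fst k + snd k) (Poly_Mapping.lookup f k))"

text \<open>The ideal I = <z^v - 1 : v \<in> L> of S[L], with S = S[L]/I.\<close>

definition I_L :: "(int^'n::finite) set \<Rightarrow> ('n, 'k::field) xz set" where
  "I_L L = gen_span (*) (SL L) {Poly_Mapping.single (0, v) 1 - 1 | v. v \<in> L}"

text \<open>I \<cdot> M for an S[L]-submodule M of R; then M \<otimes>_{S[L]} S = M \<otimes>_{S[L]} S[L]/I = M / I M.\<close>

definition IM :: "(int^'n::finite) set \<Rightarrow> ('n, 'k::field) laurent set \<Rightarrow> ('n, 'k) laurent set" where
  "IM L M = gen_span (\<lambda>i m. SL_to_R i * m) (I_L L) M"

text \<open>eta(u) = u + L, the coset of u. k[Z^n/L] is represented by finitely supported maps from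
  cosets to k; its elements are those with Poly_Mapping.keys among the cosets.\<close>

definition eta :: "(int^'n::finite) set \<Rightarrow> int^'n \<Rightarrow> (int^'n) set" where
  "eta L u = (\<lambda>v. u + v) ` L"

definition group_alg :: "(int^'n::finite) set \<Rightarrow> ((int^'n) set \<Rightarrow>\<^sub>0 'k::field) set" where
  "group_alg L = {f. Poly_Mapping.keys f \<subseteq> range (eta L)}"

text \<open>S-action on k[Z^n/L]: x^u acts as multiplication by x^(eta u) in the group algebra,
  i.e. it translates the coset c to u + c.\<close>

definition S_act :: "('n::finite, 'k::field) laurent \<Rightarrow> ((int^'n) set \<Rightarrow>\<^sub>0 'k) \<Rightarrow> ((int^'n) set \<Rightarrow>\<^sub>0 'k)" where
  "S_act s f = (\<Sum>u\<in>Poly_Mapping.keys s. \<Sum>c\<in>Poly_Mapping.keys f.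
       Poly_Mapping.single ((\<lambda>w. u + w) ` c) (Poly_Mapping.lookup s u * Poly_Mapping.lookup f c))"

definition gmono :: "(int^'n::finite) set \<Rightarrow> int^'n \<Rightarrow> ((int^'n) set \<Rightarrow>\<^sub>0 'k::field)" where
  "gmono L u = Poly_Mapping.single (eta L u) 1"

text \<open>M/K \<cong> N as S-modules, expressed (first isomorphism theorem) by a surjective
  S-linear map M \<rightarrow> N with kernel K.\<close>

definition quotient_iso ::
  "('n::finite, 'k::field) laurent set \<Rightarrow> ('n, 'k) laurent set \<Rightarrow> ((int^'n) set \<Rightarrow>\<^sub>0 'k) set \<Rightarrow> bool" where
  "quotient_iso M K N \<longleftrightarrow> (\<exists>\<Phi>. \<Phi> ` M = N \<and>
      (\<forall>m\<in>M. \<forall>m'\<in>M. \<Phi> (m + m') = \<Phi> m + \<Phi> m') \<and>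
      (\<forall>s\<in>Spoly. \<forall>m\<in>M. \<Phi> (s * m) = S_act s (\<Phi> m)) \<and>
      {m\<in>M. \<Phi> m = 0} = K)"

end

theory Submission
  imports Defs
begin

text \<open>
  The module M_psi consists of the Laurent polynomials supported on the up-set
  psi(L_R) + N^n, which is stable under translation by L. Sending every exponent to its
  coset, x^u \<mapsto> x^(eta u), gives an S-linear map Phi from M_psi to k[Z^n/L]. It kills
  I M_psi, since Phi((x^v - 1) h) = 0 for v in L. Conversely, if Phi m = 0, choose in every
  coset one exponent rho(a) of m; then the sum of the m_a x^rho(a) vanishes, so
  m = sum of (x^(a - rho(a)) - 1) m_a x^rho(a) lies in I M_psi.

  The image of Phi is generated by the x^(eta(psi p)), and vertices suffice because every
  psi(p) dominates psi(q) for some vertex q: a cell of positive dimension has a boundary point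
  y in a cell of lower dimension, and since preimages of up-sets are open, psi(y) \<le> psi
  on the cell.
\<close>

section \<open>Generated submodules and pushforward along a map of exponents\<close>

lemma gen_span_zero: "0 \<in> gen_span act A B"
  unfolding gen_span_def by (rule CollectI, rule exI[of _ 0]) auto

lemma gen_span_generator: "a \<in> A \<Longrightarrow> b \<in> B \<Longrightarrow> act a b \<in> gen_span act A B"
  unfolding gen_span_def
  by (rule CollectI, rule exI[of _ 1], rule exI[of _ "\<lambda>_. a"], rule exI[of _ "\<lambda>_. b"]) auto

lemma gen_span_add_generator:
  fixes act :: "'a \<Rightarrow> 'b \<Rightarrow> 'b::comm_monoid_add"
  assumes "x \<in> gen_span act A B" "a0 \<in> A" "b0 \<in> B"
  shows "x + act a0 b0 \<in> gen_span act A B"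
proof -
  obtain N and a :: "nat \<Rightarrow> 'a" and b :: "nat \<Rightarrow> 'b"
    where ab: "\<forall>j<N. a j \<in> A \<and> b j \<in> B" "x = (\<Sum>j<N. act (a j) (b j))"
    using assms(1) unfolding gen_span_def by blast
  define a' where "a' = a(N := a0)"
  define b' where "b' = b(N := b0)"
  have "(\<Sum>j<N. act (a' j) (b' j)) = x"
    unfolding ab(2) a'_def b'_def by (rule sum.cong) auto
  then have "x + act a0 b0 = (\<Sum>j<Suc N. act (a' j) (b' j))"
    by (simp add: a'_def b'_def)
  moreover have "\<forall>j<Suc N. a' j \<in> A \<and> b' j \<in> B"
    using ab(1) assms(2,3) by (auto simp: a'_def b'_def less_Suc_eq)
  ultimately show ?thesis
    unfolding gen_span_def by blast
qed

lemma gen_span_induct [consumes 1, case_names zero generator add]: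
  fixes act :: "'a \<Rightarrow> 'b \<Rightarrow> 'b::comm_monoid_add"
  assumes "x \<in> gen_span act A B" "P 0" "\<And>a b. a \<in> A \<Longrightarrow> b \<in> B \<Longrightarrow> P (act a b)"
    "\<And>x y. P x \<Longrightarrow> P y \<Longrightarrow> P (x + y)"
  shows "P x"
proof -
  obtain N and a :: "nat \<Rightarrow> 'a" and b :: "nat \<Rightarrow> 'b"
    where ab: "\<forall>j<N. a j \<in> A \<and> b j \<in> B" "x = (\<Sum>j<N. act (a j) (b j))"
    using assms(1) unfolding gen_span_def by blast
  have "\<forall>j<N. a j \<in> A \<and> b j \<in> B \<Longrightarrow> P (\<Sum>j<N. act (a j) (b j))" for N
    by (induction N) (simp_all add: assms(2-4))
  then show ?thesis using ab by blast
qed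

lemma gen_span_add:
  fixes act :: "'a \<Rightarrow> 'b \<Rightarrow> 'b::comm_monoid_add"
  assumes "x \<in> gen_span act A B" "y \<in> gen_span act A B"
  shows "x + y \<in> gen_span act A B"
proof -
  have "\<forall>x\<in>gen_span act A B. x + y \<in> gen_span act A B"
    using assms(2)
  proof (induction rule: gen_span_induct)
    case zero
    then show ?case by simp
  next
    case (generator a b)
    then show ?case by (simp add: gen_span_add_generator)
  next
    case (add y z)
    then show ?case by (metis add.assoc)
  qed
  then show ?thesis using assms(1) by blast
qed

lemma gen_span_sum:
  fixes act :: "'a \<Rightarrow> 'b \<Rightarrow> 'b::comm_monoid_add"
  assumes "\<And>i. i \<in> I \<Longrightarrow> f i \<in> gen_span act A B"
  shows "sum f I \<in> gen_span act A B"
  using assms by (induction I rule: infinite_finite_induct) (simp_all add: gen_span_zero gen_span_add)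

definition push_keys :: "('a \<Rightarrow> 'b) \<Rightarrow> ('a \<Rightarrow>\<^sub>0 'k::comm_monoid_add) \<Rightarrow> 'b \<Rightarrow>\<^sub>0 'k" where
  "push_keys h f = (\<Sum>a\<in>Poly_Mapping.keys f. Poly_Mapping.single (h a) (Poly_Mapping.lookup f a))"

lemma sum_single_lookup: "(\<Sum>a\<in>Poly_Mapping.keys f. Poly_Mapping.single a (Poly_Mapping.lookup f a)) = f"
  by (rule poly_mapping_eqI) (simp add: lookup_sum lookup_single when_def in_keys_iff)

lemma push_keys_zero [simp]: "push_keys h 0 = 0"
  unfolding push_keys_def by simp

lemma push_keys_single [simp]: "push_keys h (Poly_Mapping.single a c) = Poly_Mapping.single (h a) c"
  unfolding push_keys_def by (cases "c = 0") auto

lemma push_keys_add: "push_keys h (f + g) = push_keys h f + push_keys h g"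
  unfolding push_keys_def by (rule setsum_keys_plus_distrib) (auto simp: single_add)

lemma push_keys_sum: "push_keys h (sum F I) = (\<Sum>i\<in>I. push_keys h (F i))"
  by (induction I rule: infinite_finite_induct) (simp_all add: push_keys_add)

lemma push_keys_diff:
  fixes f g :: "'a \<Rightarrow>\<^sub>0 'k::ab_group_add"
  shows "push_keys h (f - g) = push_keys h f - push_keys h g"
  using push_keys_add[of h "f - g" g] by (simp add: eq_diff_eq)

lemma keys_push_keys: "Poly_Mapping.keys (push_keys h f) \<subseteq> h ` Poly_Mapping.keys f"
proof -
  have "Poly_Mapping.keys (push_keys h f) \<subseteq>
      (\<Union>a\<in>Poly_Mapping.keys f. Poly_Mapping.keys (Poly_Mapping.single (h a) (Poly_Mapping.lookup f a)))"
    unfolding push_keys_def by (rule keys_sum)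
  also have "\<dots> \<subseteq> h ` Poly_Mapping.keys f" by auto
  finally show ?thesis .
qed

lemma push_keys_comp: "push_keys g (push_keys h f) = push_keys (g \<circ> h) f"
  unfolding push_keys_def[of h] by (simp add: push_keys_sum push_keys_def[of "g \<circ> h"])

lemma mult_eq_sum_single:
  fixes f g :: "'a::comm_monoid_add \<Rightarrow>\<^sub>0 'k::comm_ring_1"
  shows "f * g = (\<Sum>a\<in>Poly_Mapping.keys f. \<Sum>b\<in>Poly_Mapping.keys g.
     Poly_Mapping.single (a + b) (Poly_Mapping.lookup f a * Poly_Mapping.lookup g b))"
  by (subst (1 2) sum_single_lookup[symmetric]) (simp add: sum_product mult_single)

lemma push_keys_mult:
  fixes f g :: "'a::comm_monoid_add \<Rightarrow>\<^sub>0 'k::comm_ring_1"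
  assumes "\<And>a b. h (a + b) = (h a + h b :: 'b::comm_monoid_add)"
  shows "push_keys h (f * g) = push_keys h f * push_keys h g"
proof -
  have "push_keys h (f * g) = (\<Sum>a\<in>Poly_Mapping.keys f. \<Sum>b\<in>Poly_Mapping.keys g.
     Poly_Mapping.single (h a + h b) (Poly_Mapping.lookup f a * Poly_Mapping.lookup g b))"
    by (subst mult_eq_sum_single) (simp add: push_keys_sum assms)
  also have "\<dots> = push_keys h f * push_keys h g"
    unfolding push_keys_def by (simp add: sum_product mult_single)
  finally show ?thesis .
qed

lemma SL_to_R_eq_push_keys: "SL_to_R = push_keys (\<lambda>k. fst k + snd k)"
  unfolding SL_to_R_def push_keys_def by (rule ext) simp

lemma SL_to_R_zero [simp]: "SL_to_R 0 = 0"
  unfolding SL_to_R_eq_push_keys by simp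

lemma SL_to_R_add: "SL_to_R (f + g) = SL_to_R f + SL_to_R g"
  unfolding SL_to_R_eq_push_keys by (rule push_keys_add)

lemma SL_to_R_mult: "SL_to_R (f * g) = SL_to_R f * SL_to_R g"
  unfolding SL_to_R_eq_push_keys by (rule push_keys_mult) (simp add: algebra_simps)

lemma SL_to_R_single: "SL_to_R (Poly_Mapping.single (u, v) c) = Poly_Mapping.single (u + v) c"
  unfolding SL_to_R_eq_push_keys by simp

lemma SL_to_R_relation: "SL_to_R (Poly_Mapping.single (0, v) 1 - 1) = xmono v - 1"
  unfolding SL_to_R_eq_push_keys xmono_def
  by (simp add: push_keys_diff flip: single_one)

section \<open>The coset map\<close>

lemma S_act_add_right: "S_act s (F + G) = S_act s F + S_act s G"
proof -
  have "(\<Sum>c\<in>Poly_Mapping.keys (F + G).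
          Poly_Mapping.single ((\<lambda>w. u + w) ` c) (Poly_Mapping.lookup s u * Poly_Mapping.lookup (F + G) c))
      = (\<Sum>c\<in>Poly_Mapping.keys F.
          Poly_Mapping.single ((\<lambda>w. u + w) ` c) (Poly_Mapping.lookup s u * Poly_Mapping.lookup F c))
      + (\<Sum>c\<in>Poly_Mapping.keys G.
          Poly_Mapping.single ((\<lambda>w. u + w) ` c) (Poly_Mapping.lookup s u * Poly_Mapping.lookup G c))"
    for u
    by (rule setsum_keys_plus_distrib) (simp_all add: distrib_left single_add)
  then show ?thesis
    unfolding S_act_def by (simp add: sum.distrib)
qed

lemma S_act_zero_right [simp]: "S_act s 0 = 0"
  unfolding S_act_def by simp

lemma S_act_sum_right: "S_act s (sum F I) = (\<Sum>i\<in>I. S_act s (F i))"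
  by (induction I rule: infinite_finite_induct) (simp_all add: S_act_add_right)

lemma S_act_single_right:
  "S_act s (Poly_Mapping.single K d) =
     (\<Sum>u\<in>Poly_Mapping.keys s. Poly_Mapping.single ((\<lambda>w. u + w) ` K) (Poly_Mapping.lookup s u * d))"
  unfolding S_act_def by (cases "d = 0") simp_all

lemma eta_translate: "(\<lambda>w. u + w) ` eta L a = eta L (u + a)"
  unfolding eta_def image_image by (simp add: add.assoc)

lemma eta_add_lattice:
  assumes "subgroup_Zn L" "v \<in> L"
  shows "eta L (v + a) = eta L a"
proof -
  have "(\<lambda>l. v + l) ` L = L"
  proof
    show "(\<lambda>l. v + l) ` L \<subseteq> L" using assms unfolding subgroup_Zn_def by blast
    show "L \<subseteq> (\<lambda>l. v + l) ` L"
    proof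
      fix l assume "l \<in> L"
      then have "- v + l \<in> L" using assms unfolding subgroup_Zn_def by blast
      then show "l \<in> (\<lambda>l. v + l) ` L" by (intro image_eqI[of _ _ "- v + l"]) simp_all
    qed
  qed
  moreover have "eta L (v + a) = (\<lambda>w. a + w) ` (\<lambda>l. v + l) ` L"
    unfolding eta_def image_image by (simp add: algebra_simps)
  ultimately show ?thesis
    unfolding eta_def by simp
qed

lemma eta_eq_imp_diff:
  assumes "subgroup_Zn L" "eta L a = eta L b"
  shows "a - b \<in> L"
proof -
  have "b \<in> eta L b" using assms(1) unfolding eta_def subgroup_Zn_def by force
  then obtain l where "l \<in> L" "b = a + l" using assms(2) unfolding eta_def by auto
  then show ?thesis using assms(1) unfolding subgroup_Zn_def by (simp add: algebra_simps)
qed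

definition coset_map :: "(int^'n::finite) set \<Rightarrow> ('n, 'k::field) laurent \<Rightarrow> ((int^'n) set \<Rightarrow>\<^sub>0 'k)" where
  "coset_map L = push_keys (eta L)"

lemma coset_map_zero [simp]: "coset_map L 0 = 0"
  unfolding coset_map_def by simp

lemma coset_map_add: "coset_map L (f + g) = coset_map L f + coset_map L g"
  unfolding coset_map_def by (rule push_keys_add)

lemma coset_map_diff: "coset_map L (f - g) = coset_map L f - coset_map L g"
  unfolding coset_map_def by (rule push_keys_diff)

lemma coset_map_xmono: "coset_map L (xmono u) = gmono L u"
  unfolding coset_map_def xmono_def gmono_def by simp

lemma coset_map_mult: "coset_map L (s * m) = S_act s (coset_map L m)"
proof -
  have "coset_map L (s * m) = (\<Sum>u\<in>Poly_Mapping.keys s. \<Sum>a\<in>Poly_Mapping.keys m.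
      Poly_Mapping.single (eta L (u + a)) (Poly_Mapping.lookup s u * Poly_Mapping.lookup m a))"
    unfolding coset_map_def by (subst mult_eq_sum_single) (simp add: push_keys_sum)
  also have "\<dots> = (\<Sum>a\<in>Poly_Mapping.keys m. \<Sum>u\<in>Poly_Mapping.keys s.
      Poly_Mapping.single (eta L (u + a)) (Poly_Mapping.lookup s u * Poly_Mapping.lookup m a))"
    by (rule sum.swap)
  also have "\<dots> = S_act s (coset_map L m)"
    unfolding coset_map_def push_keys_def
    by (simp add: S_act_sum_right S_act_single_right eta_translate)
  finally show ?thesis .
qed

lemma coset_map_xmono_mult:
  assumes "subgroup_Zn L" "v \<in> L"
  shows "coset_map L (xmono v * m) = coset_map L m"
proof -
  have "coset_map L (xmono v * m) = push_keys (\<lambda>a. eta L (v + a)) m"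
    unfolding coset_map_def xmono_def push_keys_def[of _ m]
    by (subst mult_eq_sum_single) (simp add: push_keys_sum)
  also have "\<dots> = coset_map L m"
    unfolding coset_map_def by (simp add: eta_add_lattice[OF assms])
  finally show ?thesis .
qed

section \<open>\<open>M_psi\<close> and the kernel of the coset map\<close>

definition psi_upset :: "(int^'n::finite) set \<Rightarrow> (real^'n \<Rightarrow> int^'n) \<Rightarrow> (int^'n) set" where
  "psi_upset L \<psi> = {w + \<psi> p | w p. 0 \<le> w \<and> p \<in> LR L}"

lemma psi_upset_add_nonneg:
  assumes "a \<in> psi_upset L \<psi>" "0 \<le> u"
  shows "u + a \<in> psi_upset L \<psi>"
proof -
  obtain w p where "a = w + \<psi> p" "0 \<le> w" "p \<in> LR L"
    using assms(1) unfolding psi_upset_def by blast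
  moreover have "0 \<le> u + w" using assms(2) \<open>0 \<le> w\<close> by (simp add: less_eq_vec_def)
  moreover have "u + a = (u + w) + \<psi> p" using \<open>a = w + \<psi> p\<close> by (simp add: add.assoc)
  ultimately show ?thesis
    unfolding psi_upset_def by blast
qed

lemma psi_upset_add_lattice:
  assumes "compatible_stratification L C \<psi>" "a \<in> psi_upset L \<psi>" "v \<in> L"
  shows "v + a \<in> psi_upset L \<psi>"
proof -
  obtain w p where wp: "a = w + \<psi> p" "0 \<le> w" "p \<in> LR L"
    using assms(2) unfolding psi_upset_def by blast
  have shift: "p + real_of_intvec v \<in> LR L"
    using wp(3) assms(3) unfolding LR_def by (auto intro: span_add span_base)
  have "\<psi> (p + real_of_intvec v) = \<psi> p + v"
    using assms(1) wp(3) assms(3) unfolding compatible_stratification_def by blast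
  then have "v + a = w + \<psi> (p + real_of_intvec v)"
    using wp(1) by (simp add: algebra_simps)
  then show ?thesis
    unfolding psi_upset_def using wp(2) shift by blast
qed

lemma M_psi_eq_keys_subset:
  "(M_psi L \<psi> :: ('n::finite, 'k::field) laurent set) = {f. Poly_Mapping.keys f \<subseteq> psi_upset L \<psi>}"
proof (intro set_eqI iffI CollectI)
  fix f :: "('n, 'k) laurent"
  assume "f \<in> M_psi L \<psi>"
  then show "Poly_Mapping.keys f \<subseteq> psi_upset L \<psi>"
    unfolding M_psi_def
  proof (induction rule: gen_span_induct)
    case zero
    then show ?case by simp
  next
    case (generator s g)
    then obtain p where "g = xmono (\<psi> p)" "p \<in> LR L" by blast
    have "Poly_Mapping.keys (s * g) \<subseteq> {a + b | a b. a \<in> Poly_Mapping.keys s \<and> b \<in> Poly_Mapping.keys g}"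
      by (rule keys_mult)
    also have "\<dots> \<subseteq> psi_upset L \<psi>"
      using generator(1) \<open>g = xmono (\<psi> p)\<close> \<open>p \<in> LR L\<close>
      unfolding Spoly_def psi_upset_def xmono_def by auto
    finally show ?case .
  next
    case (add x y)
    then show ?case using keys_add[of x y] by blast
  qed
next
  fix f :: "('n, 'k) laurent"
  assume "f \<in> {f. Poly_Mapping.keys f \<subseteq> psi_upset L \<psi>}"
  then have f: "Poly_Mapping.keys f \<subseteq> psi_upset L \<psi>" by simp
  have "Poly_Mapping.single a (Poly_Mapping.lookup f a) \<in> M_psi L \<psi>"
    if a: "a \<in> Poly_Mapping.keys f" for a
  proof -
    obtain w p where wp: "a = w + \<psi> p" "0 \<le> w" "p \<in> LR L"
      using f a unfolding psi_upset_def by blast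
    have eq: "Poly_Mapping.single a (Poly_Mapping.lookup f a) =
        Poly_Mapping.single w (Poly_Mapping.lookup f a) * xmono (\<psi> p)"
      by (simp add: xmono_def mult_single wp(1))
    have "Poly_Mapping.single w (Poly_Mapping.lookup f a) \<in> Spoly"
      using wp(2) by (simp add: Spoly_def)
    moreover have "xmono (\<psi> p) \<in> {xmono (\<psi> p) | p. p \<in> LR L}"
      using wp(3) by blast
    ultimately show ?thesis
      unfolding M_psi_def eq by (rule gen_span_generator)
  qed
  then have "(\<Sum>a\<in>Poly_Mapping.keys f. Poly_Mapping.single a (Poly_Mapping.lookup f a)) \<in> M_psi L \<psi>"
    unfolding M_psi_def by (rule gen_span_sum)
  then show "f \<in> M_psi L \<psi>"
    by (simp only: sum_single_lookup)
qed

lemma M_psi_zero: "0 \<in> M_psi L \<psi>"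
  unfolding M_psi_eq_keys_subset by simp

lemma M_psi_add: "f \<in> M_psi L \<psi> \<Longrightarrow> g \<in> M_psi L \<psi> \<Longrightarrow> f + g \<in> M_psi L \<psi>"
  unfolding M_psi_eq_keys_subset using keys_add[of f g] by blast

lemma M_psi_diff: "f \<in> M_psi L \<psi> \<Longrightarrow> g \<in> M_psi L \<psi> \<Longrightarrow> f - g \<in> M_psi L \<psi>"
  unfolding M_psi_eq_keys_subset using keys_diff[of f g] by blast

lemma SL_to_R_mult_M_psi:
  assumes "compatible_stratification L C \<psi>" "a \<in> SL L" "m \<in> M_psi L \<psi>"
  shows "SL_to_R a * m \<in> M_psi L \<psi>"
  unfolding M_psi_eq_keys_subset
proof (intro CollectI subsetI)
  fix z assume "z \<in> Poly_Mapping.keys (SL_to_R a * m)"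
  then obtain x y where xy: "z = x + y" "x \<in> Poly_Mapping.keys (SL_to_R a)" "y \<in> Poly_Mapping.keys m"
    using keys_mult by blast
  have "x \<in> (\<lambda>k. fst k + snd k) ` Poly_Mapping.keys a"
    using xy(2) unfolding SL_to_R_eq_push_keys by (rule subsetD[OF keys_push_keys])
  then obtain k where k: "k \<in> Poly_Mapping.keys a" "x = fst k + snd k" by blast
  have "0 \<le> fst k" "snd k \<in> L" using k(1) assms(2) unfolding SL_def by auto
  moreover have "y \<in> psi_upset L \<psi>" using xy(3) assms(3) unfolding M_psi_eq_keys_subset by blast
  ultimately have "fst k + (snd k + y) \<in> psi_upset L \<psi>"
    by (intro psi_upset_add_nonneg psi_upset_add_lattice[OF assms(1)])
  then show "z \<in> psi_upset L \<psi>" using xy(1) k(2) by (simp add: add.assoc)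
qed

lemma coset_map_ideal_mult:
  assumes "subgroup_Zn L" "i \<in> I_L L"
  shows "coset_map L (SL_to_R i * m) = 0"
proof -
  have "\<forall>m. coset_map L (SL_to_R i * m) = 0"
    using assms(2) unfolding I_L_def
  proof (induction rule: gen_span_induct)
    case zero
    then show ?case by simp
  next
    case (generator a z)
    then obtain v where v: "v \<in> L" "z = Poly_Mapping.single (0, v) 1 - 1" by blast
    have "SL_to_R (a * z) = SL_to_R a * (xmono v - 1)"
      unfolding v(2) SL_to_R_mult SL_to_R_relation ..
    then have "SL_to_R (a * z) * m = xmono v * (SL_to_R a * m) - SL_to_R a * m" for m
      unfolding \<open>SL_to_R (a * z) = _\<close> by (simp add: algebra_simps)
    then show ?case
      by (simp add: coset_map_diff coset_map_xmono_mult[OF assms(1) v(1)])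
  next
    case (add x y)
    then show ?case by (simp add: SL_to_R_add distrib_right coset_map_add)
  qed
  then show ?thesis by blast
qed

lemma ideal_mult_M_psi:
  fixes i :: "('n::finite, 'k::field) xz"
  assumes "compatible_stratification L C \<psi>" "i \<in> I_L L" "m \<in> M_psi L \<psi>"
  shows "SL_to_R i * m \<in> M_psi L \<psi>"
proof -
  have "\<forall>m\<in>M_psi L \<psi>. SL_to_R i * m \<in> M_psi L \<psi>"
    using assms(2) unfolding I_L_def
  proof (induction rule: gen_span_induct)
    case zero
    then show ?case by (simp add: M_psi_zero)
  next
    case (generator a z)
    then obtain v where v: "v \<in> L" "z = Poly_Mapping.single (0, v) 1 - 1" by blast
    have zv: "Poly_Mapping.single (0, v) 1 \<in> SL L"
      using v(1) unfolding SL_def by simp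
    show ?case
    proof
      fix m :: "('n, 'k) laurent"
      assume "m \<in> M_psi L \<psi>"
      then have h: "SL_to_R a * m \<in> M_psi L \<psi>"
        using generator(1) by (rule SL_to_R_mult_M_psi[OF assms(1), rotated])
      have "SL_to_R (a * z) = SL_to_R a * (xmono v - 1)"
        unfolding v(2) SL_to_R_mult SL_to_R_relation ..
      then have "SL_to_R (a * z) * m =
          SL_to_R (Poly_Mapping.single (0, v) 1) * (SL_to_R a * m) - SL_to_R a * m"
        unfolding \<open>SL_to_R (a * z) = _\<close> by (simp add: SL_to_R_single xmono_def algebra_simps)
      then show "SL_to_R (a * z) * m \<in> M_psi L \<psi>"
        using M_psi_diff[OF SL_to_R_mult_M_psi[OF assms(1) zv h] h] by simp
    qed
  next
    case (add x y)
    then show ?case by (simp add: SL_to_R_add distrib_right M_psi_add)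
  qed
  then show ?thesis using assms(3) by blast
qed

lemma IM_subset_kernel:
  assumes "subgroup_Zn L" "compatible_stratification L C \<psi>"
  shows "IM L (M_psi L \<psi>) \<subseteq> {m \<in> M_psi L \<psi>. coset_map L m = 0}"
proof
  fix x
  assume "x \<in> IM L (M_psi L \<psi>)"
  then show "x \<in> {m \<in> M_psi L \<psi>. coset_map L m = 0}"
    unfolding IM_def
  proof (induction rule: gen_span_induct)
    case zero
    then show ?case by (simp add: M_psi_zero)
  next
    case (generator i m)
    then show ?case
      using ideal_mult_M_psi[OF assms(2)] coset_map_ideal_mult[OF assms(1)] by blast
  next
    case (add x y)
    then show ?case by (simp add: M_psi_add coset_map_add)
  qed
qed

lemma kernel_subset_IM:
  fixes m :: "('n::finite, 'k::field) laurent"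
  assumes "subgroup_Zn L" "m \<in> M_psi L \<psi>" "coset_map L m = 0"
  shows "m \<in> IM L (M_psi L \<psi>)"
proof -
  define \<sigma> where "\<sigma> K = (SOME b. b \<in> Poly_Mapping.keys m \<and> eta L b = K)" for K
  define \<rho> where "\<rho> = \<sigma> \<circ> eta L"
  have \<rho>: "\<rho> a \<in> Poly_Mapping.keys m \<and> eta L (\<rho> a) = eta L a" if "a \<in> Poly_Mapping.keys m" for a
    unfolding \<rho>_def \<sigma>_def comp_def by (rule someI_ex) (use that in blast)
  have "push_keys \<rho> m = push_keys \<sigma> (coset_map L m)"
    unfolding coset_map_def \<rho>_def by (simp add: push_keys_comp)
  then have sum_\<rho>: "(\<Sum>a\<in>Poly_Mapping.keys m. Poly_Mapping.single (\<rho> a) (Poly_Mapping.lookup m a)) = 0"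
    unfolding push_keys_def[of \<rho>] using assms(3) by simp
  have diff_in_IM: "Poly_Mapping.single a c - Poly_Mapping.single (\<rho> a) c \<in> IM L (M_psi L \<psi>)"
    if a: "a \<in> Poly_Mapping.keys m" for a and c :: 'k
  proof -
    define v where "v = a - \<rho> a"
    have "v \<in> L" unfolding v_def using eta_eq_imp_diff[OF assms(1)] \<rho>[OF a] by metis
    then have "1 * (Poly_Mapping.single (0, v) 1 - 1) \<in> I_L L"
      using assms(1) unfolding I_L_def SL_def subgroup_Zn_def by (intro gen_span_generator) auto
    then have "Poly_Mapping.single (0, v) 1 - 1 \<in> I_L L" by simp
    moreover have "Poly_Mapping.single (\<rho> a) c \<in> M_psi L \<psi>"
      using \<rho>[OF a] assms(2) unfolding M_psi_eq_keys_subset by auto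
    ultimately have "SL_to_R (Poly_Mapping.single (0, v) 1 - 1) * Poly_Mapping.single (\<rho> a) c
        \<in> IM L (M_psi L \<psi>)"
      unfolding IM_def by (rule gen_span_generator)
    moreover have "SL_to_R (Poly_Mapping.single (0, v) 1 - 1) * Poly_Mapping.single (\<rho> a) c =
        Poly_Mapping.single a c - Poly_Mapping.single (\<rho> a) c"
      unfolding SL_to_R_relation xmono_def by (simp add: left_diff_distrib mult_single v_def)
    ultimately show ?thesis by simp
  qed
  have "m = (\<Sum>a\<in>Poly_Mapping.keys m.
      Poly_Mapping.single a (Poly_Mapping.lookup m a) - Poly_Mapping.single (\<rho> a) (Poly_Mapping.lookup m a))"
    using sum_\<rho> by (simp add: sum_subtractf sum_single_lookup)
  also have "\<dots> \<in> IM L (M_psi L \<psi>)"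
    unfolding IM_def by (rule gen_span_sum) (use diff_in_IM in \<open>simp add: IM_def\<close>)
  finally show ?thesis .
qed

lemma kernel_coset_map_M_psi:
  assumes "subgroup_Zn L" "compatible_stratification L C \<psi>"
  shows "{m \<in> M_psi L \<psi>. coset_map L m = 0} = IM L (M_psi L \<psi>)"
  using IM_subset_kernel[OF assms] kernel_subset_IM[OF assms(1)] by blast

section \<open>Open cells and vertices\<close>

definition coord_subspace :: "'n::finite set \<Rightarrow> (real^'n) set" where
  "coord_subspace J = {x. \<forall>i. i \<notin> J \<longrightarrow> x $ i = 0}"

lemma subspace_coord_subspace: "subspace (coord_subspace J)"
  unfolding coord_subspace_def subspace_vec_eq[symmetric] by (rule subspace_substandard_cart)

lemma odisc_eq: "odisc J = coord_subspace J \<inter> ball 0 1"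
  unfolding odisc_def coord_subspace_def by auto

lemma cdisc_eq: "cdisc J = coord_subspace J \<inter> cball 0 1"
  unfolding cdisc_def coord_subspace_def by auto

lemma convex_odisc: "convex (odisc J)"
  unfolding odisc_eq by (intro convex_Int subspace_imp_convex subspace_coord_subspace convex_ball)

lemma compact_cdisc: "compact (cdisc J)"
  unfolding cdisc_eq Int_commute[of "coord_subspace J"]
  by (rule compact_Int_closed[OF compact_cball closed_subspace[OF subspace_coord_subspace]])

lemma aff_dim_odisc: "aff_dim (odisc (J :: 'n::finite set)) = int (card J)"
proof -
  have "aff_dim (odisc J) = aff_dim (coord_subspace J)"
    unfolding odisc_eq
  proof (rule aff_dim_convex_Int_open)
    show "convex (coord_subspace J)"
      by (rule subspace_imp_convex[OF subspace_coord_subspace])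
    show "coord_subspace J \<inter> ball 0 1 \<noteq> {}"
      using subspace_0[OF subspace_coord_subspace] by force
  qed simp
  also have "\<dots> = int (dim (coord_subspace J))"
    by (rule aff_dim_subspace[OF subspace_coord_subspace])
  also have "dim (coord_subspace J) = card J"
    using dim_substandard_cart[where 'a = real, of J] unfolding coord_subspace_def by (simp add: dim_vec_eq)
  finally show ?thesis .
qed

lemma not_compact_odisc:
  assumes "J \<noteq> {}"
  shows "\<not> compact (odisc J)"
proof
  assume "compact (odisc J)"
  moreover have "0 \<in> odisc J" unfolding odisc_def by simp
  ultimately obtain x where x: "x \<in> odisc J" "\<forall>y\<in>odisc J. norm y \<le> norm x"
    using continuous_attains_sup[OF _ _ continuous_on_norm_id] by blast
  obtain i where "i \<in> J" using assms by blast
  define y where "y = ((1 + norm x) / 2) *\<^sub>R axis i (1::real)"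
  have "norm x < 1" using x(1) unfolding odisc_def by simp
  moreover have "norm y = (1 + norm x) / 2" unfolding y_def by simp
  ultimately have "y \<in> odisc J"
    using \<open>i \<in> J\<close> unfolding odisc_def by (auto simp: y_def axis_def)
  then show False
    using x(2) \<open>norm x < 1\<close> \<open>norm y = _\<close> by fastforce
qed

lemma cell_of_dim_unique:
  fixes e :: "(real^'n::finite) set"
  assumes "cell_of_dim e d" "cell_of_dim e d'"
  shows "d = d'"
proof -
  obtain J :: "'n set" and f g where J: "card J = d" "homeomorphism (odisc J) e f g"
    using assms(1) unfolding cell_of_dim_def by blast
  obtain J' :: "'n set" and f' g' where J': "card J' = d'" "homeomorphism (odisc J') e f' g'"
    using assms(2) unfolding cell_of_dim_def by blast
  have "odisc J homeomorphic e" "odisc J' homeomorphic e"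
    using J(2) J'(2) unfolding homeomorphic_def by blast+
  then have "odisc J homeomorphic odisc J'"
    by (meson homeomorphic_sym homeomorphic_trans)
  then have "aff_dim (odisc J) = aff_dim (odisc J')"
    by (rule homeomorphic_convex_sets[OF convex_odisc convex_odisc])
  then show ?thesis using J(1) J'(1) by (simp add: aff_dim_odisc)
qed

lemma cell_of_dim_0_singleton:
  fixes e :: "(real^'n::finite) set"
  assumes "cell_of_dim e 0"
  obtains p where "e = {p}"
proof -
  obtain J :: "'n set" and f g where "card J = 0" "homeomorphism (odisc J) e f g"
    using assms unfolding cell_of_dim_def by blast
  moreover from \<open>card J = 0\<close> have "odisc J = {0}"
    unfolding odisc_def by (auto simp: vec_eq_iff)
  ultimately have "e = {f 0}" unfolding homeomorphism_def by auto
  then show ?thesis by (rule that)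
qed

lemma cell_of_dim_boundary_nonempty:
  fixes e :: "(real^'n::finite) set"
  assumes "cell_of_dim e d" "0 < d"
  shows "closure e - e \<noteq> {}"
proof
  assume "closure e - e = {}"
  then have "closure e = e" using closure_subset[of e] by blast
  obtain J :: "'n set" and f g where J: "card J = d" "continuous_on (cdisc J) f" "f ` cdisc J = closure e"
    "homeomorphism (odisc J) e f g"
    using assms(1) unfolding cell_of_dim_def by blast
  have "compact e"
    using compact_continuous_image[OF J(2) compact_cdisc] J(3) \<open>closure e = e\<close> by simp
  then have "compact (g ` e)"
    using J(4) by (intro compact_continuous_image) (simp add: homeomorphism_def)
  moreover have "g ` e = odisc J" using J(4) unfolding homeomorphism_def by simp
  moreover have "J \<noteq> {}" using J(1) assms(2) by auto
  ultimately show False using not_compact_odisc by metis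
qed

lemma cell_complex_Union: "cell_complex X C \<Longrightarrow> \<Union>C = X"
  unfolding cell_complex_def by (elim conjE)

lemma cell_complex_cell_boundary:
  assumes "cell_complex X C" "e \<in> C"
  shows "\<exists>d. cell_of_dim e d \<and> closure e - e \<subseteq> \<Union>{e'\<in>C. \<exists>d'<d. cell_of_dim e' d'}"
  using assms unfolding cell_complex_def by (elim conjE) (rule bspec)

lemma stratification_closure_le:
  assumes "compatible_stratification L C \<psi>" "y \<in> closure E" "y \<in> LR L" "E \<subseteq> LR L"
  shows "\<exists>p\<in>E. \<psi> y \<le> \<psi> p"
proof -
  have "up_closed {w. \<psi> y \<le> w}"
    unfolding up_closed_def using order_trans by blast
  then have "openin (top_of_set (LR L)) {x \<in> LR L. \<psi> x \<in> {w. \<psi> y \<le> w}}"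
    using assms(1) unfolding compatible_stratification_def by blast
  then obtain V where V: "open V" "{x \<in> LR L. \<psi> y \<le> \<psi> x} = LR L \<inter> V"
    unfolding openin_open by auto
  then have "V \<inter> closure E \<noteq> {}" using assms(2,3) by blast
  then have "V \<inter> E \<noteq> {}" using open_Int_closure_eq_empty[OF V(1)] by blast
  then show ?thesis using V(2) assms(4) by blast
qed

lemma exists_vertex_le_cell:
  assumes cc: "cell_complex (LR L) C" and cs: "compatible_stratification L C \<psi>"
    and "e \<in> C" "cell_of_dim e d" "p \<in> e"
  shows "\<exists>q\<in>vertices C. \<psi> q \<le> \<psi> p"
  using assms(3-5)
proof (induction d arbitrary: e p rule: less_induct)
  case (less d)
  show ?case
  proof (cases "d = 0")
    case True
    then have "cell_of_dim e 0" using less.prems(2) by simp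
    then obtain p' where "e = {p'}" by (rule cell_of_dim_0_singleton)
    then show ?thesis using less.prems(1,3) unfolding vertices_def by auto
  next
    case False
    obtain d0 where d0: "cell_of_dim e d0" "closure e - e \<subseteq> \<Union>{e'\<in>C. \<exists>d'<d0. cell_of_dim e' d'}"
      using cell_complex_cell_boundary[OF cc less.prems(1)] by blast
    have "d0 = d" using cell_of_dim_unique[OF d0(1) less.prems(2)] .
    obtain y where y: "y \<in> closure e" "y \<notin> e"
      using cell_of_dim_boundary_nonempty[OF less.prems(2)] False by blast
    then obtain e' d' where e': "e' \<in> C" "d' < d" "cell_of_dim e' d'" "y \<in> e'"
      using d0(2) \<open>d0 = d\<close> by blast
    obtain q where q: "q \<in> vertices C" "\<psi> q \<le> \<psi> y"
      using less.IH[OF e'(2,1,3,4)] by blast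
    have "y \<in> LR L" "e \<subseteq> LR L" using e'(1,4) less.prems(1) cell_complex_Union[OF cc] by blast+
    then obtain p' where p': "p' \<in> e" "\<psi> y \<le> \<psi> p'"
      using stratification_closure_le[OF cs y(1)] by blast
    have "\<psi> p' = \<psi> p"
      using cs less.prems(1,3) p'(1) unfolding compatible_stratification_def by blast
    then have "\<psi> q \<le> \<psi> p" using order_trans[OF q(2) p'(2)] by simp
    then show ?thesis using q(1) by blast
  qed
qed

lemma exists_vertex_le:
  assumes "cell_complex (LR L) C" "compatible_stratification L C \<psi>" "p \<in> LR L"
  shows "\<exists>q\<in>vertices C. \<psi> q \<le> \<psi> p"
proof -
  obtain e where "e \<in> C" "p \<in> e" using assms(3) cell_complex_Union[OF assms(1)] by blast
  moreover obtain d where "cell_of_dim e d" using cell_complex_cell_boundary[OF assms(1) \<open>e \<in> C\<close>] by blast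
  ultimately show ?thesis using exists_vertex_le_cell[OF assms(1,2)] by blast
qed

section \<open>The image of the coset map\<close>

lemma Spoly_mult: "s \<in> Spoly \<Longrightarrow> t \<in> Spoly \<Longrightarrow> s * t \<in> Spoly"
  using keys_mult[of s t] unfolding Spoly_def by (fastforce simp: less_eq_vec_def)

lemma xmono_Spoly: "0 \<le> u \<Longrightarrow> xmono u \<in> Spoly"
  unfolding xmono_def Spoly_def by simp

lemma coset_map_M_psi_subset:
  assumes "cell_complex (LR L) C" "compatible_stratification L C \<psi>"
  shows "coset_map L ` M_psi L \<psi> \<subseteq> gen_span S_act Spoly {gmono L (\<psi> p) | p. p \<in> vertices C}"
proof clarify
  fix m
  assume "m \<in> M_psi L \<psi>"
  then show "coset_map L m \<in> gen_span S_act Spoly {gmono L (\<psi> p) | p. p \<in> vertices C}"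
    unfolding M_psi_def
  proof (induction rule: gen_span_induct)
    case zero
    then show ?case by (simp add: gen_span_zero)
  next
    case (generator s g)
    then obtain p where p: "g = xmono (\<psi> p)" "p \<in> LR L" by blast
    obtain q where q: "q \<in> vertices C" "\<psi> q \<le> \<psi> p"
      using exists_vertex_le[OF assms p(2)] by blast
    have "s * g = (s * xmono (\<psi> p - \<psi> q)) * xmono (\<psi> q)"
      unfolding p(1) xmono_def by (simp add: mult.assoc mult_single)
    then have eq: "coset_map L (s * g) = S_act (s * xmono (\<psi> p - \<psi> q)) (gmono L (\<psi> q))"
      by (simp add: coset_map_mult coset_map_xmono)
    have "0 \<le> \<psi> p - \<psi> q"
      using q(2) by (simp add: less_eq_vec_def)
    then have "s * xmono (\<psi> p - \<psi> q) \<in> Spoly"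
      using generator(1) by (intro Spoly_mult xmono_Spoly)
    moreover have "gmono L (\<psi> q) \<in> {gmono L (\<psi> p) | p. p \<in> vertices C}"
      using q(1) by blast
    ultimately show ?case
      unfolding eq by (rule gen_span_generator)
  next
    case (add x y)
    then show ?case by (simp add: coset_map_add gen_span_add)
  qed
qed

lemma gen_span_vertices_subset_coset_map:
  assumes "cell_complex (LR L) C"
  shows "gen_span S_act Spoly {gmono L (\<psi> p) | p. p \<in> vertices C} \<subseteq> coset_map L ` M_psi L \<psi>"
proof
  fix n
  assume "n \<in> gen_span S_act Spoly {gmono L (\<psi> p) | p. p \<in> vertices C}"
  then show "n \<in> coset_map L ` M_psi L \<psi>"
  proof (induction rule: gen_span_induct)
    case zero
    show ?case by (rule image_eqI[of _ _ 0]) (simp_all add: M_psi_zero)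
  next
    case (generator s G)
    then obtain p where p: "G = gmono L (\<psi> p)" "p \<in> vertices C" by blast
    then have "p \<in> LR L" using cell_complex_Union[OF assms] unfolding vertices_def by blast
    then have "s * xmono (\<psi> p) \<in> M_psi L \<psi>"
      unfolding M_psi_def using generator(1) by (intro gen_span_generator) auto
    moreover have "S_act s G = coset_map L (s * xmono (\<psi> p))"
      by (simp add: coset_map_mult coset_map_xmono p(1))
    ultimately show ?case by (rule rev_image_eqI)
  next
    case (add x y)
    then obtain mx my where "mx \<in> M_psi L \<psi>" "my \<in> M_psi L \<psi>" "x = coset_map L mx" "y = coset_map L my"
      by blast
    then show ?case by (intro rev_image_eqI[of "mx + my"]) (simp_all add: M_psi_add coset_map_add)
  qed
qed

theorem proposition2p15:
  fixes L :: "(int^'n::finite) set"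
    and C :: "(real^'n) set set"
    and \<psi> :: "real^'n \<Rightarrow> int^'n"
  assumes "subgroup_Zn L"
    and "cell_complex (LR L) C"
    and "L_equivariant L C"
    and "compatible_stratification L C \<psi>"
  shows "quotient_iso (M_psi L \<psi> :: ('n, 'k::field) laurent set) (IM L (M_psi L \<psi>))
           (gen_span S_act Spoly {gmono L (\<psi> p) | p. p \<in> vertices C})"
  unfolding quotient_iso_def
proof (intro exI conjI ballI)
  show "coset_map L ` M_psi L \<psi> = gen_span S_act Spoly {gmono L (\<psi> p) | p. p \<in> vertices C}"
    using coset_map_M_psi_subset[OF assms(2,4)]
      gen_span_vertices_subset_coset_map[OF assms(2)] by blast
  show "{m \<in> M_psi L \<psi>. coset_map L m = 0} = IM L (M_psi L \<psi>)"
    using kernel_coset_map_M_psi[OF assms(1,4)] .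
qed (simp_all add: coset_map_add coset_map_mult)

end
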